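(* Let $n$ individuals be connected by a directed graph with in-neighborhoods $\mathcal N_i$ (self-loops allowed), and suppose the potential outcomes are linear: $Y_i(\mathbf z)=c_{i,\emptyset}+\sum_{j\in\mathcal N_i}c_{ij}z_j$. Let $L_j=\sum_{i:j\in\mathcal N_i}|c_{ij}|$ and $L_{\max}=\max_jL_j$. Observations are $Y^{\mathrm{obs}}_{i,t}=Y_i(\mathbf z^t)+\varepsilon_{i,t}$ for $t=0,1$, with $\varepsilon_{i,t}$ i.i.d. $N(0,\sigma^2)$ independent of treatments, and $\mathbf z^0=\mathbf 0$. (1) If $\mathbf z^1$ has i.i.d. Bernoulli$(p)$ entries ($0<p\le1$), the estimator $\widehat{\mathrm{TTE}}=\frac1{p}\cdot\frac1n\sum_i(Y^{\mathrm{obs}}_{i,1}-Y^{\mathrm{obs}}_{i,0})$ has variance at most $\frac{1-p}{np}L_{\max}^2+\frac{2\sigma^2}{np^2}$. (2) If $\mathbf z^1$ is the indicator of a uniformly random subset of size $k$ ($1\le k\le n$), the estimator $\widehat{\mathrm{TTE}}=\frac nk\cdot\frac1n\sum_i(Y^{\mathrm{obs}}_{i,1}-Y^{\mathrm{obs}}_{i,0})$ has variance at most $\frac{n-k}{(n-1)k}L_{\max}^2+\frac{2\sigma^2 n}{k^2}$.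
   Context: These estimators are the polynomial-interpolation estimators $\sum_{t=0}^1(\ell_t(1)-\ell_t(0))\frac1n\sum_iY^{\mathrm{obs}}_{i,t}$ with interpolation nodes $(0,p)$ and $(0,k/n)$ respectively, written out explicitly. *)

theory Defs
  imports "HOL-Probability.Probability"
begin

definition lin_outcome ::
  "(nat \<Rightarrow> real) \<Rightarrow> (nat \<Rightarrow> nat \<Rightarrow> real) \<Rightarrow> (nat \<Rightarrow> nat set) \<Rightarrow> nat \<Rightarrow> (nat \<Rightarrow> real) \<Rightarrow> real"
  where "lin_outcome c0 c N i z = c0 i + (\<Sum>j\<in>N i. c i j * z j)"

definition L_out :: "nat \<Rightarrow> (nat \<Rightarrow> nat \<Rightarrow> real) \<Rightarrow> (nat \<Rightarrow> nat set) \<Rightarrow> nat \<Rightarrow> real"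
  where "L_out n c N j = (\<Sum>i\<in>{i. i < n \<and> j \<in> N i}. \<bar>c i j\<bar>)"

definition L_max :: "nat \<Rightarrow> (nat \<Rightarrow> nat \<Rightarrow> real) \<Rightarrow> (nat \<Rightarrow> nat set) \<Rightarrow> real"
  where "L_max n c N = Max (L_out n c N ` {..<n})"

definition Y_obs ::
  "(nat \<Rightarrow> real) \<Rightarrow> (nat \<Rightarrow> nat \<Rightarrow> real) \<Rightarrow> (nat \<Rightarrow> nat set)
   \<Rightarrow> (nat \<Rightarrow> 'w \<Rightarrow> real) \<Rightarrow> (nat \<Rightarrow> nat \<Rightarrow> 'w \<Rightarrow> real) \<Rightarrow> nat \<Rightarrow> nat \<Rightarrow> 'w \<Rightarrow> real"
  where "Y_obs c0 c N Z eps i t \<omega> =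
    (if t = 0 then lin_outcome c0 c N i (\<lambda>_. 0) else lin_outcome c0 c N i (\<lambda>j. Z j \<omega>)) + eps i t \<omega>"

definition noise_ok :: "'w measure \<Rightarrow> nat \<Rightarrow> real \<Rightarrow> (nat \<Rightarrow> 'w \<Rightarrow> real) \<Rightarrow> (nat \<Rightarrow> nat \<Rightarrow> 'w \<Rightarrow> real) \<Rightarrow> bool"
  where "noise_ok M n \<sigma> Z eps \<longleftrightarrow>
     prob_space.indep_vars M (\<lambda>_. borel) (\<lambda>(i,t). eps i t) ({..<n} \<times> {0,1}) \<and>
     (\<forall>i<n. \<forall>t\<in>{0,1}. distributed M lborel (eps i t) (\<lambda>x. ennreal (normal_density 0 \<sigma> x))) \<and>
     (\<forall>j<n. Z j \<in> borel_measurable M) \<and>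
     prob_space.indep_set M
        (sigma_sets (space M) {Z j -` A \<inter> space M | j A. j < n \<and> A \<in> sets borel})
        (sigma_sets (space M) {eps i t -` A \<inter> space M | i t A. i < n \<and> t \<in> {0,1} \<and> A \<in> sets borel})"

end

theory Submission
  imports Defs
begin

(* Summing Y_{i,1} - Y_{i,0} over i turns the estimator into a linear function of the treatments
   plus noise: sum_j a_j z_j + sum_i (eps_{i,1} - eps_{i,0}) with a_j = sum_{i: j in N_i} c_ij, so
   that |a_j| <= L_j <= L_max. The noise is centred, uncorrelated with the treatments and
   contributes 2 n sigma^2. Both designs are exchangeable, E z_j = m and E z_j z_l = q for j ~= l,
   so Var (sum_j a_j z_j) = (m - q) sum_j a_j^2 + (q - m^2) (sum_j a_j)^2. Bernoulli(p) gives
   m = p, q = p^2; a uniform k-subset gives m = k/n and q = k(k-1)/(n(n-1)) <= m^2. In both cases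
   the treatment part is at most (m - q) n L_max^2. *)

definition out_effect :: "nat \<Rightarrow> (nat \<Rightarrow> nat \<Rightarrow> real) \<Rightarrow> (nat \<Rightarrow> nat set) \<Rightarrow> nat \<Rightarrow> real"
  where "out_effect n c N j = (\<Sum>i\<in>{i. i < n \<and> j \<in> N i}. c i j)"

lemma abs_out_effect_le_L_max:
  assumes "j < n"
  shows "\<bar>out_effect n c N j\<bar> \<le> L_max n c N"
proof -
  have "\<bar>out_effect n c N j\<bar> \<le> L_out n c N j"
    unfolding out_effect_def L_out_def by (rule sum_abs)
  also have "\<dots> \<le> L_max n c N"
    unfolding L_max_def using assms by (intro Max_ge) auto
  finally show ?thesis .
qed

lemma sum_out_effect_sq_le:
  "(\<Sum>j<n. (out_effect n c N j)\<^sup>2) \<le> real n * (L_max n c N)\<^sup>2"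
proof -
  have "(\<Sum>j<n. (out_effect n c N j)\<^sup>2) \<le> (\<Sum>j<n. (L_max n c N)\<^sup>2)"
    using abs_out_effect_le_L_max
    by (intro sum_mono) (meson abs_ge_self abs_le_square_iff lessThan_iff order_trans)
  then show ?thesis by simp
qed

lemma sum_Y_obs_diff:
  assumes "\<And>i. i < n \<Longrightarrow> N i \<subseteq> {..<n}"
  shows "(\<Sum>i<n. Y_obs c0 c N Z eps i 1 \<omega> - Y_obs c0 c N Z eps i 0 \<omega>)
    = (\<Sum>j<n. out_effect n c N j * Z j \<omega>) + (\<Sum>i<n. eps i 1 \<omega> - eps i 0 \<omega>)"
proof -
  have "{j\<in>{..<n}. j \<in> N i} = N i" if "i < n" for i
    using assms[OF that] by blast
  then have "(\<Sum>i<n. \<Sum>j\<in>N i. c i j * Z j \<omega>) = (\<Sum>i<n. \<Sum>j\<in>{j\<in>{..<n}. j \<in> N i}. c i j * Z j \<omega>)"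
    by simp
  also have "\<dots> = (\<Sum>j<n. \<Sum>i\<in>{i\<in>{..<n}. j \<in> N i}. c i j * Z j \<omega>)"
    by (rule sum.swap_restrict) simp_all
  also have "\<dots> = (\<Sum>j<n. out_effect n c N j * Z j \<omega>)"
    by (simp add: out_effect_def sum_distrib_right)
  finally show ?thesis
    by (simp add: Y_obs_def lin_outcome_def sum.distrib sum_subtractf)
qed

lemma noise_sum_lincomb:
  fixes eps :: "nat \<Rightarrow> nat \<Rightarrow> 'w \<Rightarrow> real"
  shows "(\<Sum>i<n. eps i 1 \<omega> - eps i 0 \<omega>)
    = (\<Sum>u\<in>{..<n} \<times> {0, 1}. (if snd u = 1 then 1 else -1) * case_prod eps u \<omega>)"
  unfolding sum.cartesian_product' by simp

lemma noise_ok_treatment_measurable: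
  "noise_ok M n \<sigma> Z eps \<Longrightarrow> j < n \<Longrightarrow> Z j \<in> borel_measurable M"
  by (simp add: noise_ok_def)

lemma card_supersets:
  assumes "finite A" "B \<subseteq> A" "card B \<le> k"
  shows "card {S. S \<subseteq> A \<and> card S = k \<and> B \<subseteq> S} = (card A - card B) choose (k - card B)"
proof -
  have fin: "finite B" "\<And>S. S \<subseteq> A \<Longrightarrow> finite S"
    using assms(1,2) finite_subset by blast+
  have "bij_betw (\<lambda>S. S - B) {S. S \<subseteq> A \<and> card S = k \<and> B \<subseteq> S} {S. S \<subseteq> A - B \<and> card S = k - card B}"
  proof (rule bij_betw_byWitness[where f'="\<lambda>S. S \<union> B"])
    show "(\<lambda>S. S - B) ` {S. S \<subseteq> A \<and> card S = k \<and> B \<subseteq> S} \<subseteq> {S. S \<subseteq> A - B \<and> card S = k - card B}"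
      using fin by (auto simp: card_Diff_subset)
    show "(\<lambda>S. S \<union> B) ` {S. S \<subseteq> A - B \<and> card S = k - card B} \<subseteq> {S. S \<subseteq> A \<and> card S = k \<and> B \<subseteq> S}"
    proof clarify
      fix S assume S: "S \<subseteq> A - B" "card S = k - card B"
      then have "card (S \<union> B) = card S + card B"
        using fin by (intro card_Un_disjoint) auto
      then show "S \<union> B \<subseteq> A \<and> card (S \<union> B) = k \<and> B \<subseteq> S \<union> B"
        using S assms(2,3) by auto
    qed
  qed auto
  then have "card {S. S \<subseteq> A \<and> card S = k \<and> B \<subseteq> S} = card {S. S \<subseteq> A - B \<and> card S = k - card B}"
    by (rule bij_betw_same_card)
  also have "\<dots> = (card A - card B) choose (k - card B)"
    using assms fin by (simp add: n_subsets card_Diff_subset)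
  finally show ?thesis .
qed

lemma choose_diff_one_div_choose:
  assumes "1 \<le> k" "k \<le> n"
  shows "real ((n - 1) choose (k - 1)) / real (n choose k) = real k / real n"
proof -
  have "real k * real (n choose k) = real n * real ((n - 1) choose (k - 1))"
    using binomial_absorption[of "k - 1" n] assms by (metis Suc_pred' less_le_trans of_nat_mult zero_less_one)
  moreover have "real (n choose k) > 0" "real n > 0"
    using assms by simp_all
  ultimately show ?thesis
    by (auto simp: frac_eq_eq algebra_simps)
qed

lemma choose_diff_two_div_choose:
  assumes "2 \<le> k" "k \<le> n"
  shows "real ((n - 2) choose (k - 2)) / real (n choose k) = real k * (real k - 1) / (real n * (real n - 1))"
proof -
  have "n - 2 = n - 1 - 1" "k - 2 = k - 1 - 1" "real ((n - 1) choose (k - 1)) \<noteq> 0"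
    using assms by simp_all
  then have "real ((n - 2) choose (k - 2)) / real (n choose k)
      = real ((n - 1 - 1) choose (k - 1 - 1)) / real ((n - 1) choose (k - 1))
        * (real ((n - 1) choose (k - 1)) / real (n choose k))"
    by simp
  also have "\<dots> = real (k - 1) / real (n - 1) * (real k / real n)"
    using choose_diff_one_div_choose[of "k - 1" "n - 1"] choose_diff_one_div_choose[of k n] assms
    by simp
  also have "\<dots> = real k * (real k - 1) / (real n * (real n - 1))"
    using assms by (simp add: of_nat_diff mult.commute)
  finally show ?thesis .
qed

context prob_space
begin

lemma
  fixes X :: "'i \<Rightarrow> 'a \<Rightarrow> real" and Y :: "'j \<Rightarrow> 'a \<Rightarrow> real"
  assumes "\<And>i j. i \<in> I \<Longrightarrow> j \<in> J \<Longrightarrow> integrable M (\<lambda>\<omega>. X i \<omega> * Y j \<omega>)"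
  shows integrable_sum_mult_sum:
      "integrable M (\<lambda>\<omega>. (\<Sum>i\<in>I. a i * X i \<omega>) * (\<Sum>j\<in>J. b j * Y j \<omega>))"
    and expectation_sum_mult_sum:
      "expectation (\<lambda>\<omega>. (\<Sum>i\<in>I. a i * X i \<omega>) * (\<Sum>j\<in>J. b j * Y j \<omega>))
        = (\<Sum>i\<in>I. \<Sum>j\<in>J. a i * b j * expectation (\<lambda>\<omega>. X i \<omega> * Y j \<omega>))"
proof -
  have eq: "(\<lambda>\<omega>. (\<Sum>i\<in>I. a i * X i \<omega>) * (\<Sum>j\<in>J. b j * Y j \<omega>))
      = (\<lambda>\<omega>. \<Sum>i\<in>I. \<Sum>j\<in>J. a i * b j * (X i \<omega> * Y j \<omega>))"
    by (simp add: sum_product mult_ac)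
  show "integrable M (\<lambda>\<omega>. (\<Sum>i\<in>I. a i * X i \<omega>) * (\<Sum>j\<in>J. b j * Y j \<omega>))"
    unfolding eq using assms by auto
  show "expectation (\<lambda>\<omega>. (\<Sum>i\<in>I. a i * X i \<omega>) * (\<Sum>j\<in>J. b j * Y j \<omega>))
      = (\<Sum>i\<in>I. \<Sum>j\<in>J. a i * b j * expectation (\<lambda>\<omega>. X i \<omega> * Y j \<omega>))"
    unfolding eq using assms by simp
qed

lemma variance_scale:
  fixes X :: "'a \<Rightarrow> real"
  shows "variance (\<lambda>\<omega>. \<alpha> * X \<omega>) = \<alpha>\<^sup>2 * variance X"
proof -
  have "(\<lambda>\<omega>. (\<alpha> * X \<omega> - expectation (\<lambda>\<omega>. \<alpha> * X \<omega>))\<^sup>2)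
      = (\<lambda>\<omega>. \<alpha>\<^sup>2 * (X \<omega> - expectation X)\<^sup>2)"
    by (simp add: power_mult_distrib flip: right_diff_distrib)
  then show ?thesis by simp
qed

lemma variance_lincomb:
  fixes X :: "'i \<Rightarrow> 'a \<Rightarrow> real"
  assumes "\<And>j. j \<in> J \<Longrightarrow> integrable M (X j)"
    and XX: "\<And>j l. j \<in> J \<Longrightarrow> l \<in> J \<Longrightarrow> integrable M (\<lambda>\<omega>. X j \<omega> * X l \<omega>)"
  shows "variance (\<lambda>\<omega>. \<Sum>j\<in>J. a j * X j \<omega>)
    = (\<Sum>j\<in>J. \<Sum>l\<in>J. a j * a l *
         (expectation (\<lambda>\<omega>. X j \<omega> * X l \<omega>) - expectation (X j) * expectation (X l)))"
proof -
  have "variance (\<lambda>\<omega>. \<Sum>j\<in>J. a j * X j \<omega>)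
      = expectation (\<lambda>\<omega>. (\<Sum>j\<in>J. a j * X j \<omega>) * (\<Sum>l\<in>J. a l * X l \<omega>))
        - (\<Sum>j\<in>J. a j * expectation (X j)) * (\<Sum>l\<in>J. a l * expectation (X l))"
    using assms integrable_sum_mult_sum[of J J X X a a, OF XX]
    by (subst variance_eq) (auto simp: power2_eq_square)
  also have "expectation (\<lambda>\<omega>. (\<Sum>j\<in>J. a j * X j \<omega>) * (\<Sum>l\<in>J. a l * X l \<omega>))
      = (\<Sum>j\<in>J. \<Sum>l\<in>J. a j * a l * expectation (\<lambda>\<omega>. X j \<omega> * X l \<omega>))"
    by (rule expectation_sum_mult_sum[OF XX])
  also have "(\<Sum>j\<in>J. a j * expectation (X j)) * (\<Sum>l\<in>J. a l * expectation (X l))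
      = (\<Sum>j\<in>J. \<Sum>l\<in>J. a j * a l * (expectation (X j) * expectation (X l)))"
    by (simp add: sum_product mult_ac)
  finally show ?thesis
    by (simp add: sum_subtractf right_diff_distrib)
qed

lemma variance_add_uncorrelated:
  fixes X Y :: "'a \<Rightarrow> real"
  assumes "integrable M X" "integrable M Y"
    and "integrable M (\<lambda>\<omega>. (X \<omega>)\<^sup>2)" "integrable M (\<lambda>\<omega>. (Y \<omega>)\<^sup>2)"
    and "integrable M (\<lambda>\<omega>. X \<omega> * Y \<omega>)"
    and "expectation (\<lambda>\<omega>. X \<omega> * Y \<omega>) = expectation X * expectation Y"
  shows "variance (\<lambda>\<omega>. X \<omega> + Y \<omega>) = variance X + variance Y"
proof -
  have sq: "(\<lambda>\<omega>. (X \<omega> + Y \<omega>)\<^sup>2) = (\<lambda>\<omega>. (X \<omega>)\<^sup>2 + 2 * (X \<omega> * Y \<omega>) + (Y \<omega>)\<^sup>2)"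
    by (simp add: power2_sum fun_eq_iff algebra_simps)
  have "variance (\<lambda>\<omega>. X \<omega> + Y \<omega>)
      = expectation (\<lambda>\<omega>. (X \<omega> + Y \<omega>)\<^sup>2) - (expectation (\<lambda>\<omega>. X \<omega> + Y \<omega>))\<^sup>2"
    using assms by (intro variance_eq) (simp_all add: sq)
  also have "\<dots> = (expectation (\<lambda>\<omega>. (X \<omega>)\<^sup>2) - (expectation X)\<^sup>2)
      + (expectation (\<lambda>\<omega>. (Y \<omega>)\<^sup>2) - (expectation Y)\<^sup>2)"
    unfolding sq using assms by (simp add: power2_sum)
  also have "\<dots> = variance X + variance Y"
    using assms by (simp add: variance_eq)
  finally show ?thesis .
qed

lemma variance_lincomb_exchangeable:
  fixes X :: "'i \<Rightarrow> 'a \<Rightarrow> real"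
  assumes "finite J"
    and "\<And>j. j \<in> J \<Longrightarrow> integrable M (X j)" "\<And>j. j \<in> J \<Longrightarrow> expectation (X j) = m"
    and "\<And>j l. j \<in> J \<Longrightarrow> l \<in> J \<Longrightarrow> integrable M (\<lambda>\<omega>. X j \<omega> * X l \<omega>)"
    and "\<And>j l. j \<in> J \<Longrightarrow> l \<in> J \<Longrightarrow>
           expectation (\<lambda>\<omega>. X j \<omega> * X l \<omega>) = (if j = l then m else q)"
  shows "variance (\<lambda>\<omega>. \<Sum>j\<in>J. a j * X j \<omega>)
    = (m - q) * (\<Sum>j\<in>J. (a j)\<^sup>2) + (q - m\<^sup>2) * (\<Sum>j\<in>J. a j)\<^sup>2"
proof -
  have "variance (\<lambda>\<omega>. \<Sum>j\<in>J. a j * X j \<omega>)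
      = (\<Sum>j\<in>J. \<Sum>l\<in>J. a j * a l *
         (expectation (\<lambda>\<omega>. X j \<omega> * X l \<omega>) - expectation (X j) * expectation (X l)))"
    using assms(2,4) by (rule variance_lincomb)
  also have "\<dots> = (\<Sum>j\<in>J. \<Sum>l\<in>J. (if j = l then (m - q) * (a j)\<^sup>2 else 0) + (q - m\<^sup>2) * (a j * a l))"
    using assms(3,5) by (intro sum.cong refl) (simp add: power2_eq_square algebra_simps)
  also have "\<dots> = (m - q) * (\<Sum>j\<in>J. (a j)\<^sup>2) + (q - m\<^sup>2) * (\<Sum>j\<in>J. \<Sum>l\<in>J. a j * a l)"
    using assms(1) by (simp add: sum.distrib sum_distrib_left)
  also have "(\<Sum>j\<in>J. \<Sum>l\<in>J. a j * a l) = (\<Sum>j\<in>J. a j)\<^sup>2"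
    by (simp add: power2_eq_square sum_product)
  finally show ?thesis .
qed

lemma normal_distributed_moments:
  assumes "0 < \<sigma>" and D: "distributed M lborel X (\<lambda>x. ennreal (normal_density 0 \<sigma> x))"
  shows "integrable M X" "expectation X = 0"
    and "integrable M (\<lambda>\<omega>. X \<omega> * X \<omega>)" "expectation (\<lambda>\<omega>. X \<omega> * X \<omega>) = \<sigma>\<^sup>2"
proof -
  show "integrable M X"
    using integrable_normal_moment[where k=1 and \<mu>=0, OF \<open>0 < \<sigma>\<close>]
    by (intro distributed_integrable_var[OF D]) (simp_all add: normal_density_nonneg)
  have "integrable lborel (\<lambda>x. normal_density 0 \<sigma> x * (x * x))"
    using integrable_normal_moment[where k=2 and \<mu>=0, OF \<open>0 < \<sigma>\<close>] by (simp add: power2_eq_square)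
  then show "integrable M (\<lambda>\<omega>. X \<omega> * X \<omega>)"
    using distributed_integrable[OF D, of "\<lambda>x. x * x"] by (simp add: normal_density_nonneg)
  show "expectation X = 0"
    using normal_distributed_expectation[OF \<open>0 < \<sigma>\<close> D] .
  then show "expectation (\<lambda>\<omega>. X \<omega> * X \<omega>) = \<sigma>\<^sup>2"
    using normal_distributed_variance[OF \<open>0 < \<sigma>\<close> D] by (simp add: power2_eq_square)
qed

lemma integrable_zero_one:
  fixes X :: "'a \<Rightarrow> real"
  assumes "X \<in> borel_measurable M" "\<forall>\<omega>\<in>space M. X \<omega> \<in> {0, 1}"
  shows "integrable M X"
  using assms by (intro integrable_const_bound[where B=1]) (auto intro!: AE_I2)

lemma expectation_zero_one:
  fixes X :: "'a \<Rightarrow> real"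
  assumes "X \<in> borel_measurable M" "\<forall>\<omega>\<in>space M. X \<omega> \<in> {0, 1}"
  shows "expectation X = prob {\<omega>\<in>space M. X \<omega> = 1}"
proof -
  have "expectation X = expectation (indicator {\<omega>\<in>space M. X \<omega> = 1})"
    using assms(2) by (intro Bochner_Integration.integral_cong) (auto simp: indicator_def)
  also have "\<dots> = prob {\<omega>\<in>space M. X \<omega> = 1}"
    using assms(1) by simp
  finally show ?thesis .
qed

lemma
  fixes X Y :: "'a \<Rightarrow> real"
  assumes "X \<in> borel_measurable M" "\<forall>\<omega>\<in>space M. X \<omega> \<in> {0, 1}"
    and "Y \<in> borel_measurable M" "\<forall>\<omega>\<in>space M. Y \<omega> \<in> {0, 1}"
  shows integrable_mult_zero_one: "integrable M (\<lambda>\<omega>. X \<omega> * Y \<omega>)"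
    and expectation_mult_zero_one:
      "expectation (\<lambda>\<omega>. X \<omega> * Y \<omega>) = prob {\<omega>\<in>space M. X \<omega> = 1 \<and> Y \<omega> = 1}"
proof -
  have XY: "\<forall>\<omega>\<in>space M. X \<omega> * Y \<omega> \<in> {0, 1}"
  proof
    fix \<omega> assume "\<omega> \<in> space M"
    then have "X \<omega> \<in> {0, 1}" "Y \<omega> \<in> {0, 1}"
      using assms(2,4) by auto
    then show "X \<omega> * Y \<omega> \<in> {0, 1}" by auto
  qed
  show "integrable M (\<lambda>\<omega>. X \<omega> * Y \<omega>)"
    using assms(1,3) XY by (intro integrable_zero_one) auto
  have "{\<omega>\<in>space M. X \<omega> * Y \<omega> = 1} = {\<omega>\<in>space M. X \<omega> = 1 \<and> Y \<omega> = 1}"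
    using assms(2,4) by auto
  then show "expectation (\<lambda>\<omega>. X \<omega> * Y \<omega>) = prob {\<omega>\<in>space M. X \<omega> = 1 \<and> Y \<omega> = 1}"
    using assms(1,3) XY expectation_zero_one[of "\<lambda>\<omega>. X \<omega> * Y \<omega>"] by simp
qed

lemma indep_set_mono:
  "indep_set A B \<Longrightarrow> A' \<subseteq> A \<Longrightarrow> B' \<subseteq> B \<Longrightarrow> indep_set A' B'"
  unfolding indep_set_def by (rule indep_sets_mono_sets) (auto split: bool.split)

lemma variance_lincomb_zero_one_exchangeable:
  fixes X :: "'i \<Rightarrow> 'a \<Rightarrow> real"
  assumes "finite J"
    and meas: "\<And>j. j \<in> J \<Longrightarrow> X j \<in> borel_measurable M"
    and X01: "\<And>j. j \<in> J \<Longrightarrow> \<forall>\<omega>\<in>space M. X j \<omega> \<in> {0, 1}"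
    and P: "\<And>j l. j \<in> J \<Longrightarrow> l \<in> J \<Longrightarrow>
      prob {\<omega>\<in>space M. X j \<omega> = 1 \<and> X l \<omega> = 1} = (if j = l then m else q)"
  shows "variance (\<lambda>\<omega>. \<Sum>j\<in>J. a j * X j \<omega>)
    = (m - q) * (\<Sum>j\<in>J. (a j)\<^sup>2) + (q - m\<^sup>2) * (\<Sum>j\<in>J. a j)\<^sup>2"
proof (rule variance_lincomb_exchangeable[OF \<open>finite J\<close>])
  show "integrable M (X j)" if "j \<in> J" for j
    using that by (intro integrable_zero_one meas X01)
  show "integrable M (\<lambda>\<omega>. X j \<omega> * X l \<omega>)" if "j \<in> J" "l \<in> J" for j l
    using that by (intro integrable_mult_zero_one meas X01)
  show "expectation (\<lambda>\<omega>. X j \<omega> * X l \<omega>) = (if j = l then m else q)" if "j \<in> J" "l \<in> J" for j l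
    using that meas X01 P by (simp add: expectation_mult_zero_one)
  show "expectation (X j) = m" if "j \<in> J" for j
  proof -
    have "expectation (X j) = prob {\<omega>\<in>space M. X j \<omega> = 1 \<and> X j \<omega> = 1}"
      using that meas X01 by (simp add: expectation_zero_one)
    then show ?thesis
      using P[OF that that] by simp
  qed
qed

lemma bernoulli_design_prob:
  fixes Z :: "'j \<Rightarrow> 'a \<Rightarrow> real"
  assumes ind: "indep_vars (\<lambda>_. borel) Z J"
    and Z01: "\<forall>j\<in>J. \<forall>\<omega>\<in>space M. Z j \<omega> \<in> {0, 1}"
    and P: "\<forall>j\<in>J. prob {\<omega>\<in>space M. Z j \<omega> = 1} = p"
    and j: "j \<in> J" and l: "l \<in> J"
  shows "prob {\<omega>\<in>space M. Z j \<omega> = 1 \<and> Z l \<omega> = 1} = (if j = l then p else p\<^sup>2)"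
proof (cases "j = l")
  case True
  then show ?thesis
    using P j by simp
next
  case False
  have Zm: "Z i \<in> borel_measurable M" if "i \<in> J" for i
    using ind that unfolding indep_vars_def2 by auto
  have ind2: "indep_vars (\<lambda>_. borel) Z {j, l}"
    by (rule indep_vars_subset[OF ind]) (use j l in auto)
  have "expectation (\<lambda>\<omega>. \<Prod>i\<in>{j, l}. Z i \<omega>) = (\<Prod>i\<in>{j, l}. expectation (Z i))"
    by (rule indep_vars_lebesgue_integral[OF _ ind2]) (use j l Zm Z01 in \<open>auto intro: integrable_zero_one\<close>)
  moreover have "expectation (Z i) = p" if "i \<in> J" for i
    using expectation_zero_one[OF Zm[OF that]] Z01 P that by auto
  moreover have "expectation (\<lambda>\<omega>. Z j \<omega> * Z l \<omega>) = prob {\<omega>\<in>space M. Z j \<omega> = 1 \<and> Z l \<omega> = 1}"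
    using j l Zm Z01 by (intro expectation_mult_zero_one) auto
  ultimately show ?thesis
    using False j l by (simp add: power2_eq_square)
qed

lemma variance_lincomb_bernoulli:
  fixes Z :: "'j \<Rightarrow> 'a \<Rightarrow> real"
  assumes "finite J" and ind: "indep_vars (\<lambda>_. borel) Z J"
    and Z01: "\<forall>j\<in>J. \<forall>\<omega>\<in>space M. Z j \<omega> \<in> {0, 1}"
    and P: "\<forall>j\<in>J. prob {\<omega>\<in>space M. Z j \<omega> = 1} = p"
  shows "variance (\<lambda>\<omega>. \<Sum>j\<in>J. a j * Z j \<omega>) = p * (1 - p) * (\<Sum>j\<in>J. (a j)\<^sup>2)"
proof -
  have "variance (\<lambda>\<omega>. \<Sum>j\<in>J. a j * Z j \<omega>)
      = (p - p\<^sup>2) * (\<Sum>j\<in>J. (a j)\<^sup>2) + (p\<^sup>2 - p\<^sup>2) * (\<Sum>j\<in>J. a j)\<^sup>2"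
  proof (rule variance_lincomb_zero_one_exchangeable[OF \<open>finite J\<close>])
    show "Z j \<in> borel_measurable M" if "j \<in> J" for j
      using ind that unfolding indep_vars_def2 by auto
  qed (use Z01 bernoulli_design_prob[OF ind Z01 P] in auto)
  then show ?thesis
    by (simp add: power2_eq_square algebra_simps)
qed

lemma AE_uniform_subset_card:
  fixes T :: "'a \<Rightarrow> 'i set"
  assumes A: "finite A" "k \<le> card A"
    and ev: "\<And>S. S \<subseteq> A \<Longrightarrow> {\<omega>\<in>space M. T \<omega> = S} \<in> events"
    and unif: "\<And>S. S \<subseteq> A \<Longrightarrow> card S = k \<Longrightarrow> prob {\<omega>\<in>space M. T \<omega> = S} = 1 / real (card A choose k)"
  shows "AE \<omega> in M. T \<omega> \<in> {S. S \<subseteq> A \<and> card S = k}"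
proof -
  define K where "K = {S. S \<subseteq> A \<and> card S = k}"
  have "finite K"
    unfolding K_def using A(1) by (auto intro: finite_subset[of _ "Pow A"])
  then have "prob (\<Union>S\<in>K. {\<omega>\<in>space M. T \<omega> = S}) = (\<Sum>S\<in>K. prob {\<omega>\<in>space M. T \<omega> = S})"
    using ev unfolding K_def by (intro measure_finite_Union) (auto simp: disjoint_family_on_def)
  also have "\<dots> = 1"
    using unif A n_subsets[OF A(1), of k] by (simp add: K_def)
  finally show ?thesis
    unfolding K_def by (rule AE_prob_1[THEN AE_mp]) (auto intro!: AE_I2)
qed

lemma prob_uniform_subset_superset:
  fixes T :: "'a \<Rightarrow> 'i set"
  assumes A: "finite A" "k \<le> card A"
    and T: "\<And>\<omega>. \<omega> \<in> space M \<Longrightarrow> T \<omega> \<subseteq> A"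
    and ev: "\<And>S. S \<subseteq> A \<Longrightarrow> {\<omega>\<in>space M. T \<omega> = S} \<in> events"
    and unif: "\<And>S. S \<subseteq> A \<Longrightarrow> card S = k \<Longrightarrow> prob {\<omega>\<in>space M. T \<omega> = S} = 1 / real (card A choose k)"
  shows "prob {\<omega>\<in>space M. B \<subseteq> T \<omega>}
    = real (card {S. S \<subseteq> A \<and> card S = k \<and> B \<subseteq> S}) / real (card A choose k)"
proof -
  define E where "E S = {\<omega>\<in>space M. T \<omega> = S}" for S
  define K\<^sub>B where "K\<^sub>B = {S. S \<subseteq> A \<and> card S = k \<and> B \<subseteq> S}"
  have "finite K\<^sub>B"
    unfolding K\<^sub>B_def using A(1) by (auto intro: finite_subset[of _ "Pow A"])
  have "AE \<omega> in M. T \<omega> \<in> {S. S \<subseteq> A \<and> card S = k}"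
    using A ev unif by (rule AE_uniform_subset_card)
  then have "prob {\<omega>\<in>space M. B \<subseteq> T \<omega>} = prob (\<Union>S\<in>K\<^sub>B. E S)"
  proof (rule measure_eq_AE[OF AE_mp])
    show "AE \<omega> in M. T \<omega> \<in> {S. S \<subseteq> A \<and> card S = k} \<longrightarrow>
        (\<omega> \<in> {\<omega>\<in>space M. B \<subseteq> T \<omega>}) = (\<omega> \<in> (\<Union>S\<in>K\<^sub>B. E S))"
      by (intro AE_I2) (auto simp: E_def K\<^sub>B_def)
    have "{\<omega>\<in>space M. B \<subseteq> T \<omega>} = (\<Union>S\<in>{S. S \<subseteq> A \<and> B \<subseteq> S}. E S)"
      using T by (auto simp: E_def)
    then show "{\<omega>\<in>space M. B \<subseteq> T \<omega>} \<in> events"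
      using A(1) ev by (auto simp: E_def intro!: sets.finite_UN intro: finite_subset[of _ "Pow A"])
    show "(\<Union>S\<in>K\<^sub>B. E S) \<in> events"
      using \<open>finite K\<^sub>B\<close> ev by (auto simp: E_def K\<^sub>B_def)
  qed
  also have "\<dots> = (\<Sum>S\<in>K\<^sub>B. prob (E S))"
    using \<open>finite K\<^sub>B\<close> ev unfolding E_def K\<^sub>B_def
    by (intro measure_finite_Union) (auto simp: disjoint_family_on_def)
  also have "\<dots> = real (card K\<^sub>B) / real (card A choose k)"
    using unif by (simp add: E_def K\<^sub>B_def)
  finally show ?thesis
    unfolding K\<^sub>B_def .
qed

lemma uniform_subset_design_prob_superset:
  fixes Z :: "nat \<Rightarrow> 'a \<Rightarrow> real"
  assumes Zm: "\<And>j. j < n \<Longrightarrow> Z j \<in> borel_measurable M"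
    and D: "\<forall>S. S \<subseteq> {..<n} \<and> card S = k \<longrightarrow>
      prob {\<omega>\<in>space M. {j. j < n \<and> Z j \<omega> = 1} = S} = 1 / real (n choose k)"
    and "k \<le> n" and "B \<subseteq> {..<n}"
  shows "prob {\<omega>\<in>space M. \<forall>j\<in>B. Z j \<omega> = 1}
    = real (card {S. S \<subseteq> {..<n} \<and> card S = k \<and> B \<subseteq> S}) / real (n choose k)"
proof -
  define T where "T \<omega> = {j. j < n \<and> Z j \<omega> = 1}" for \<omega>
  have ev: "{\<omega>\<in>space M. T \<omega> = S} \<in> events" if "S \<subseteq> {..<n}" for S
  proof -
    have "{\<omega>\<in>space M. T \<omega> = S} = {\<omega>\<in>space M. \<forall>i\<in>{..<n}. (Z i \<omega> = 1) = (i \<in> S)}"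
      using that by (auto simp: T_def)
    also have "\<dots> \<in> events"
    proof (rule sets.sets_Collect_finite_All)
      fix i assume "i \<in> {..<n}"
      then have [measurable]: "Z i \<in> borel_measurable M"
        using Zm by simp
      show "{\<omega>\<in>space M. (Z i \<omega> = 1) = (i \<in> S)} \<in> events"
        by measurable
    qed simp
    finally show ?thesis .
  qed
  have "prob {\<omega>\<in>space M. \<forall>j\<in>B. Z j \<omega> = 1} = prob {\<omega>\<in>space M. B \<subseteq> T \<omega>}"
    using \<open>B \<subseteq> {..<n}\<close> by (intro arg_cong[where f=prob]) (auto simp: T_def)
  also have "\<dots> = real (card {S. S \<subseteq> {..<n} \<and> card S = k \<and> B \<subseteq> S}) / real (n choose k)"
    using \<open>k \<le> n\<close> ev D by (subst prob_uniform_subset_superset[where A="{..<n}" and k=k]) (auto simp: T_def)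
  finally show ?thesis .
qed

lemma uniform_subset_design_prob:
  fixes Z :: "nat \<Rightarrow> 'a \<Rightarrow> real"
  assumes Zm: "\<And>j. j < n \<Longrightarrow> Z j \<in> borel_measurable M"
    and D: "\<forall>S. S \<subseteq> {..<n} \<and> card S = k \<longrightarrow>
      prob {\<omega>\<in>space M. {j. j < n \<and> Z j \<omega> = 1} = S} = 1 / real (n choose k)"
    and k: "1 \<le> k" "k \<le> n" and j: "j < n" and l: "l < n"
  shows "prob {\<omega>\<in>space M. Z j \<omega> = 1 \<and> Z l \<omega> = 1}
    = (if j = l then real k / real n else real k * (real k - 1) / (real n * (real n - 1)))"
proof -
  have P: "prob {\<omega>\<in>space M. Z j \<omega> = 1 \<and> Z l \<omega> = 1}
      = real (card {S. S \<subseteq> {..<n} \<and> card S = k \<and> {j, l} \<subseteq> S}) / real (n choose k)"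
    using uniform_subset_design_prob_superset[OF Zm D \<open>k \<le> n\<close>, of "{j, l}"] j l by simp
  consider "j = l" | "j \<noteq> l" "k = 1" | "j \<noteq> l" "2 \<le> k"
    using k by linarith
  then show ?thesis
  proof cases
    case 1
    then show ?thesis
      using P card_supersets[of "{..<n}" "{j}" k] j k choose_diff_one_div_choose[OF k] by simp
  next
    case 2
    have "\<not> (S \<subseteq> {..<n} \<and> card S = k \<and> {j, l} \<subseteq> S)" for S
    proof
      assume S: "S \<subseteq> {..<n} \<and> card S = k \<and> {j, l} \<subseteq> S"
      then have "card {j, l} \<le> card S"
        by (intro card_mono) (auto intro: finite_subset)
      with S 2 show False by simp
    qed
    then show ?thesis
      using P 2 by simp
  next
    case 3
    then show ?thesis
      using P card_supersets[of "{..<n}" "{j, l}" k] j l k choose_diff_two_div_choose[of k n]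
      by (simp add: numeral_2_eq_2)
  qed
qed

lemma variance_lincomb_uniform_subset:
  fixes Z :: "nat \<Rightarrow> 'a \<Rightarrow> real"
  assumes Zm: "\<And>j. j < n \<Longrightarrow> Z j \<in> borel_measurable M"
    and Z01: "\<forall>j<n. \<forall>\<omega>\<in>space M. Z j \<omega> \<in> {0, 1}"
    and D: "\<forall>S. S \<subseteq> {..<n} \<and> card S = k \<longrightarrow>
      prob {\<omega>\<in>space M. {j. j < n \<and> Z j \<omega> = 1} = S} = 1 / real (n choose k)"
    and k: "1 \<le> k" "k \<le> n"
  shows "variance (\<lambda>\<omega>. \<Sum>j<n. a j * Z j \<omega>)
    \<le> real k / real n * ((real n - real k) / (real n - 1)) * (\<Sum>j<n. (a j)\<^sup>2)"
proof -
  define m where "m = real k / real n"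
  define q where "q = real k * (real k - 1) / (real n * (real n - 1))"
  have V: "variance (\<lambda>\<omega>. \<Sum>j<n. a j * Z j \<omega>)
      = (m - q) * (\<Sum>j<n. (a j)\<^sup>2) + (q - m\<^sup>2) * (\<Sum>j<n. a j)\<^sup>2"
    unfolding m_def q_def using Zm Z01 uniform_subset_design_prob[OF Zm D k]
    by (intro variance_lincomb_zero_one_exchangeable) auto
  show ?thesis
  proof (cases "n = 1")
    case True
    \<comment> \<open>then k = 1, the design is deterministic and the factor (n - k) / (n - 1) is 0 / 0 = 0\<close>
    with k show ?thesis
      unfolding V by (simp add: m_def q_def)
  next
    case False
    then have "real n \<ge> 2"
      using k by simp
    then have "m - q = real k / real n * ((real n - real k) / (real n - 1))" "q - m\<^sup>2 \<le> 0"
      using k by (auto simp: m_def q_def field_simps power2_eq_square)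
    then show ?thesis
      unfolding V by (simp add: mult_nonpos_nonneg)
  qed
qed

lemma
  assumes noise: "noise_ok M n \<sigma> Z eps" and "0 < \<sigma>" and "u \<in> {..<n} \<times> {0, 1}"
  shows noise_ok_integrable: "integrable M (case_prod eps u)"
    and noise_ok_expectation: "expectation (case_prod eps u) = 0"
proof -
  have "distributed M lborel (case_prod eps u) (\<lambda>x. ennreal (normal_density 0 \<sigma> x))"
    using noise \<open>u \<in> {..<n} \<times> {0, 1}\<close> unfolding noise_ok_def by auto
  then show "integrable M (case_prod eps u)" "expectation (case_prod eps u) = 0"
    using normal_distributed_moments \<open>0 < \<sigma>\<close> by blast+
qed

lemma
  assumes noise: "noise_ok M n \<sigma> Z eps" and "0 < \<sigma>"
    and u: "u \<in> {..<n} \<times> {0, 1}" and v: "v \<in> {..<n} \<times> {0, 1}"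
  shows noise_ok_integrable_mult:
      "integrable M (\<lambda>\<omega>. case_prod eps u \<omega> * case_prod eps v \<omega>)"
    and noise_ok_expectation_mult:
      "expectation (\<lambda>\<omega>. case_prod eps u \<omega> * case_prod eps v \<omega>) = (if u = v then \<sigma>\<^sup>2 else 0)"
proof -
  have "integrable M (\<lambda>\<omega>. case_prod eps u \<omega> * case_prod eps v \<omega>) \<and>
    expectation (\<lambda>\<omega>. case_prod eps u \<omega> * case_prod eps v \<omega>) = (if u = v then \<sigma>\<^sup>2 else 0)"
  proof (cases "u = v")
    case True
    have "distributed M lborel (case_prod eps u) (\<lambda>x. ennreal (normal_density 0 \<sigma> x))"
      using noise u unfolding noise_ok_def by auto
    then show ?thesis
      using True normal_distributed_moments(3,4) \<open>0 < \<sigma>\<close> by simp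
  next
    case False
    have ind: "indep_vars (\<lambda>_. borel) (case_prod eps) {u, v}"
      using noise u v unfolding noise_ok_def by (auto intro: indep_vars_subset)
    have int: "\<And>w. w \<in> {u, v} \<Longrightarrow> integrable M (case_prod eps w)"
      using noise_ok_integrable[OF noise \<open>0 < \<sigma>\<close>] u v by auto
    show ?thesis
      using indep_vars_integrable[OF _ ind int] indep_vars_lebesgue_integral[OF _ ind int]
        noise_ok_expectation[OF noise \<open>0 < \<sigma>\<close> u] False
      by simp
  qed
  then show "integrable M (\<lambda>\<omega>. case_prod eps u \<omega> * case_prod eps v \<omega>)"
    and "expectation (\<lambda>\<omega>. case_prod eps u \<omega> * case_prod eps v \<omega>) = (if u = v then \<sigma>\<^sup>2 else 0)"
    by blast+
qed

lemma
  assumes noise: "noise_ok M n \<sigma> Z eps" and "0 < \<sigma>"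
    and Z01: "\<forall>\<omega>\<in>space M. Z j \<omega> \<in> {0, 1}" and "j < n"
    and u: "u \<in> {..<n} \<times> {0, 1}"
  shows noise_ok_integrable_treatment_mult: "integrable M (\<lambda>\<omega>. Z j \<omega> * case_prod eps u \<omega>)"
    and noise_ok_expectation_treatment_mult: "expectation (\<lambda>\<omega>. Z j \<omega> * case_prod eps u \<omega>) = 0"
proof -
  obtain i t where it: "u = (i, t)" "i < n" "t \<in> {0, 1}"
    using u by auto
  have Zj: "Z j \<in> borel_measurable M"
    using noise \<open>j < n\<close> by (rule noise_ok_treatment_measurable)
  have int_eps: "integrable M (case_prod eps u)"
    by (rule noise_ok_integrable[OF noise \<open>0 < \<sigma>\<close> u])
  have "indep_var borel (Z j) borel (case_prod eps u)"
    unfolding indep_var_eq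
  proof (intro conjI)
    show "random_variable borel (Z j)" "random_variable borel (case_prod eps u)"
      using Zj int_eps by auto
    show "indep_set (sigma_sets (space M) {Z j -` A \<inter> space M |A. A \<in> sets borel})
        (sigma_sets (space M) {case_prod eps u -` A \<inter> space M |A. A \<in> sets borel})"
    proof (rule indep_set_mono)
      show "indep_set
          (sigma_sets (space M) {Z j -` A \<inter> space M | j A. j < n \<and> A \<in> sets borel})
          (sigma_sets (space M)
            {eps i t -` A \<inter> space M | i t A. i < n \<and> t \<in> {0, 1} \<and> A \<in> sets borel})"
        using noise unfolding noise_ok_def by blast
    qed (intro sigma_sets_mono'; use it \<open>j < n\<close> in auto)+
  qed
  note ind = this and int_Z = integrable_zero_one[OF Zj Z01]
  show "integrable M (\<lambda>\<omega>. Z j \<omega> * case_prod eps u \<omega>)"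
    by (rule indep_var_integrable[OF ind int_Z int_eps])
  show "expectation (\<lambda>\<omega>. Z j \<omega> * case_prod eps u \<omega>) = 0"
    using indep_var_lebesgue_integral[OF ind int_Z int_eps] noise_ok_expectation[OF noise \<open>0 < \<sigma>\<close> u]
    by simp
qed

lemma
  assumes noise: "noise_ok M n \<sigma> Z eps" and "0 < \<sigma>"
  shows integrable_noise_sum: "integrable M (\<lambda>\<omega>. \<Sum>i<n. eps i 1 \<omega> - eps i 0 \<omega>)"
    and expectation_noise_sum: "expectation (\<lambda>\<omega>. \<Sum>i<n. eps i 1 \<omega> - eps i 0 \<omega>) = 0"
    and integrable_noise_sum_sq: "integrable M (\<lambda>\<omega>. (\<Sum>i<n. eps i 1 \<omega> - eps i 0 \<omega>)\<^sup>2)"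
    and variance_noise_sum: "variance (\<lambda>\<omega>. \<Sum>i<n. eps i 1 \<omega> - eps i 0 \<omega>) = 2 * real n * \<sigma>\<^sup>2"
proof -
  define I where "I = {..<n} \<times> {0::nat, 1}"
  define b :: "nat \<times> nat \<Rightarrow> real" where "b u = (if snd u = 1 then 1 else -1)" for u
  have B: "(\<Sum>i<n. eps i 1 \<omega> - eps i 0 \<omega>) = (\<Sum>u\<in>I. b u * case_prod eps u \<omega>)" for \<omega>
    unfolding I_def b_def noise_sum_lincomb ..
  note e = noise_ok_integrable[OF noise \<open>0 < \<sigma>\<close>] noise_ok_expectation[OF noise \<open>0 < \<sigma>\<close>]
  note ee = noise_ok_integrable_mult[OF noise \<open>0 < \<sigma>\<close>] noise_ok_expectation_mult[OF noise \<open>0 < \<sigma>\<close>]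
  show "integrable M (\<lambda>\<omega>. \<Sum>i<n. eps i 1 \<omega> - eps i 0 \<omega>)"
    unfolding B using e by (auto simp: I_def)
  show "expectation (\<lambda>\<omega>. \<Sum>i<n. eps i 1 \<omega> - eps i 0 \<omega>) = 0"
    unfolding B using e by (simp add: I_def)
  show "integrable M (\<lambda>\<omega>. (\<Sum>i<n. eps i 1 \<omega> - eps i 0 \<omega>)\<^sup>2)"
    unfolding B power2_eq_square using ee by (intro integrable_sum_mult_sum) (auto simp: I_def)
  have "variance (\<lambda>\<omega>. \<Sum>i<n. eps i 1 \<omega> - eps i 0 \<omega>)
      = (\<Sum>u\<in>I. \<Sum>v\<in>I. b u * b v * (expectation (\<lambda>\<omega>. case_prod eps u \<omega> * case_prod eps v \<omega>)
          - expectation (case_prod eps u) * expectation (case_prod eps v)))"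
    unfolding B using e ee unfolding I_def by (intro variance_lincomb) auto
  also have "\<dots> = (\<Sum>u\<in>I. \<Sum>v\<in>I. if u = v then \<sigma>\<^sup>2 else 0)"
    using e ee by (intro sum.cong refl) (auto simp: I_def b_def)
  also have "\<dots> = (\<Sum>u\<in>I. \<sigma>\<^sup>2)"
    by (intro sum.cong refl) (simp add: I_def)
  also have "\<dots> = 2 * real n * \<sigma>\<^sup>2"
    by (simp add: I_def card_cartesian_product)
  finally show "variance (\<lambda>\<omega>. \<Sum>i<n. eps i 1 \<omega> - eps i 0 \<omega>) = 2 * real n * \<sigma>\<^sup>2" .
qed

lemma
  assumes noise: "noise_ok M n \<sigma> Z eps" and "0 < \<sigma>"
    and Z01: "\<forall>j<n. \<forall>\<omega>\<in>space M. Z j \<omega> \<in> {0, 1}"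
  shows integrable_treatments_mult_noise_sum:
      "integrable M (\<lambda>\<omega>. (\<Sum>j<n. a j * Z j \<omega>) * (\<Sum>i<n. eps i 1 \<omega> - eps i 0 \<omega>))"
    and expectation_treatments_mult_noise_sum:
      "expectation (\<lambda>\<omega>. (\<Sum>j<n. a j * Z j \<omega>) * (\<Sum>i<n. eps i 1 \<omega> - eps i 0 \<omega>)) = 0"
proof -
  define I where "I = {..<n} \<times> {0::nat, 1}"
  define b :: "nat \<times> nat \<Rightarrow> real" where "b u = (if snd u = 1 then 1 else -1)" for u
  have B: "(\<Sum>i<n. eps i 1 \<omega> - eps i 0 \<omega>) = (\<Sum>u\<in>I. b u * case_prod eps u \<omega>)" for \<omega>
    unfolding I_def b_def noise_sum_lincomb ..
  note Ze = noise_ok_integrable_treatment_mult[OF noise \<open>0 < \<sigma>\<close>]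
    noise_ok_expectation_treatment_mult[OF noise \<open>0 < \<sigma>\<close>]
  show "integrable M (\<lambda>\<omega>. (\<Sum>j<n. a j * Z j \<omega>) * (\<Sum>i<n. eps i 1 \<omega> - eps i 0 \<omega>))"
    unfolding B using Ze Z01 by (intro integrable_sum_mult_sum) (auto simp: I_def)
  show "expectation (\<lambda>\<omega>. (\<Sum>j<n. a j * Z j \<omega>) * (\<Sum>i<n. eps i 1 \<omega> - eps i 0 \<omega>)) = 0"
    unfolding B using Ze Z01 by (subst expectation_sum_mult_sum) (auto simp: I_def)
qed

lemma variance_sum_Y_obs_diff:
  assumes noise: "noise_ok M n \<sigma> Z eps" and "0 < \<sigma>"
    and Z01: "\<forall>j<n. \<forall>\<omega>\<in>space M. Z j \<omega> \<in> {0, 1}"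
    and N: "\<And>i. i < n \<Longrightarrow> N i \<subseteq> {..<n}"
  shows "variance (\<lambda>\<omega>. \<Sum>i<n. Y_obs c0 c N Z eps i 1 \<omega> - Y_obs c0 c N Z eps i 0 \<omega>)
    = variance (\<lambda>\<omega>. \<Sum>j<n. out_effect n c N j * Z j \<omega>) + 2 * real n * \<sigma>\<^sup>2"
proof -
  define A where "A = (\<lambda>\<omega>. \<Sum>j<n. out_effect n c N j * Z j \<omega>)"
  define B where "B = (\<lambda>\<omega>. \<Sum>i<n. eps i 1 \<omega> - eps i 0 \<omega>)"
  note Zm = noise_ok_treatment_measurable[OF noise]
  have "(\<lambda>\<omega>. \<Sum>i<n. Y_obs c0 c N Z eps i 1 \<omega> - Y_obs c0 c N Z eps i 0 \<omega>) = (\<lambda>\<omega>. A \<omega> + B \<omega>)"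
    unfolding A_def B_def using sum_Y_obs_diff[OF N] by (rule ext)
  then have "variance (\<lambda>\<omega>. \<Sum>i<n. Y_obs c0 c N Z eps i 1 \<omega> - Y_obs c0 c N Z eps i 0 \<omega>)
      = variance (\<lambda>\<omega>. A \<omega> + B \<omega>)"
    by (rule arg_cong)
  also have "\<dots> = variance A + variance B"
  proof (rule variance_add_uncorrelated)
    have "integrable M (Z j)" if "j < n" for j
      using that Zm Z01 by (intro integrable_zero_one) auto
    then show "integrable M A"
      unfolding A_def by auto
    show "integrable M (\<lambda>\<omega>. (A \<omega>)\<^sup>2)"
      unfolding A_def power2_eq_square using Zm Z01
      by (intro integrable_sum_mult_sum integrable_mult_zero_one) auto
    show "integrable M B" "integrable M (\<lambda>\<omega>. (B \<omega>)\<^sup>2)"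
      unfolding B_def using integrable_noise_sum integrable_noise_sum_sq noise \<open>0 < \<sigma>\<close> by blast+
    show "integrable M (\<lambda>\<omega>. A \<omega> * B \<omega>)"
      unfolding A_def B_def by (rule integrable_treatments_mult_noise_sum[OF noise \<open>0 < \<sigma>\<close> Z01])
    show "expectation (\<lambda>\<omega>. A \<omega> * B \<omega>) = expectation A * expectation B"
      unfolding A_def B_def
      using expectation_treatments_mult_noise_sum[OF noise \<open>0 < \<sigma>\<close> Z01]
        expectation_noise_sum[OF noise \<open>0 < \<sigma>\<close>]
      by simp
  qed
  also have "variance B = 2 * real n * \<sigma>\<^sup>2"
    unfolding B_def by (rule variance_noise_sum[OF noise \<open>0 < \<sigma>\<close>])
  finally show ?thesis
    unfolding A_def .
qed

lemma variance_estimator_le: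
  assumes "variance (\<lambda>\<omega>. \<Sum>j<n. out_effect n c N j * Z j \<omega>) \<le> V"
    and "noise_ok M n \<sigma> Z eps" "0 < \<sigma>"
    and "\<forall>j<n. \<forall>\<omega>\<in>space M. Z j \<omega> \<in> {0, 1}"
    and "\<And>i. i < n \<Longrightarrow> N i \<subseteq> {..<n}"
  shows "variance (\<lambda>\<omega>. \<alpha> * (\<Sum>i<n. Y_obs c0 c N Z eps i 1 \<omega> - Y_obs c0 c N Z eps i 0 \<omega>))
    \<le> \<alpha>\<^sup>2 * (V + 2 * real n * \<sigma>\<^sup>2)"
proof -
  have "variance (\<lambda>\<omega>. \<alpha> * (\<Sum>i<n. Y_obs c0 c N Z eps i 1 \<omega> - Y_obs c0 c N Z eps i 0 \<omega>))
      = \<alpha>\<^sup>2 * (variance (\<lambda>\<omega>. \<Sum>j<n. out_effect n c N j * Z j \<omega>) + 2 * real n * \<sigma>\<^sup>2)"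
    by (simp only: variance_scale variance_sum_Y_obs_diff[OF assms(2-5)])
  also have "\<dots> \<le> \<alpha>\<^sup>2 * (V + 2 * real n * \<sigma>\<^sup>2)"
    using assms(1) by (intro mult_left_mono) auto
  finally show ?thesis .
qed

lemma variance_estimator_bernoulli:
  fixes Z :: "nat \<Rightarrow> 'a \<Rightarrow> real"
  assumes "1 \<le> n" and N: "\<And>i. i < n \<Longrightarrow> N i \<subseteq> {..<n}" and "0 < \<sigma>"
    and p: "0 < p" "p \<le> 1" and noise: "noise_ok M n \<sigma> Z eps"
    and ind: "indep_vars (\<lambda>_. borel) Z {..<n}"
    and Z01: "\<forall>j<n. \<forall>\<omega>\<in>space M. Z j \<omega> \<in> {0, 1}"
    and P: "\<forall>j<n. prob {\<omega>\<in>space M. Z j \<omega> = 1} = p"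
  shows "variance (\<lambda>\<omega>. (1 / p) * (1 / real n) *
      (\<Sum>i<n. Y_obs c0 c N Z eps i 1 \<omega> - Y_obs c0 c N Z eps i 0 \<omega>))
    \<le> (1 - p) / (real n * p) * (L_max n c N)\<^sup>2 + 2 * \<sigma>\<^sup>2 / (real n * p\<^sup>2)"
proof -
  have "variance (\<lambda>\<omega>. \<Sum>j<n. out_effect n c N j * Z j \<omega>)
      = p * (1 - p) * (\<Sum>j<n. (out_effect n c N j)\<^sup>2)"
    using ind Z01 P by (intro variance_lincomb_bernoulli) auto
  also have "\<dots> \<le> p * (1 - p) * (real n * (L_max n c N)\<^sup>2)"
    using p by (intro mult_left_mono sum_out_effect_sq_le) simp
  finally have "variance (\<lambda>\<omega>. (1 / p) * (1 / real n) *
      (\<Sum>i<n. Y_obs c0 c N Z eps i 1 \<omega> - Y_obs c0 c N Z eps i 0 \<omega>))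
    \<le> ((1 / p) * (1 / real n))\<^sup>2 * (p * (1 - p) * (real n * (L_max n c N)\<^sup>2) + 2 * real n * \<sigma>\<^sup>2)"
    using noise \<open>0 < \<sigma>\<close> Z01 N by (rule variance_estimator_le)
  also have "\<dots> = (1 - p) / (real n * p) * (L_max n c N)\<^sup>2 + 2 * \<sigma>\<^sup>2 / (real n * p\<^sup>2)"
    using p \<open>1 \<le> n\<close> by (simp add: field_simps power2_eq_square)
  finally show ?thesis .
qed

lemma variance_estimator_uniform_subset:
  fixes Z :: "nat \<Rightarrow> 'a \<Rightarrow> real"
  assumes "1 \<le> n" and N: "\<And>i. i < n \<Longrightarrow> N i \<subseteq> {..<n}" and "0 < \<sigma>"
    and k: "1 \<le> k" "k \<le> n" and noise: "noise_ok M n \<sigma> Z eps"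
    and Z01: "\<forall>j<n. \<forall>\<omega>\<in>space M. Z j \<omega> \<in> {0, 1}"
    and D: "\<forall>S. S \<subseteq> {..<n} \<and> card S = k \<longrightarrow>
      prob {\<omega>\<in>space M. {j. j < n \<and> Z j \<omega> = 1} = S} = 1 / real (n choose k)"
  shows "variance (\<lambda>\<omega>. (real n / real k) * (1 / real n) *
      (\<Sum>i<n. Y_obs c0 c N Z eps i 1 \<omega> - Y_obs c0 c N Z eps i 0 \<omega>))
    \<le> (real n - real k) / ((real n - 1) * real k) * (L_max n c N)\<^sup>2
      + 2 * \<sigma>\<^sup>2 * real n / (real k)\<^sup>2"
proof -
  define F where "F = (real n - real k) / (real n - 1)"
  have "F \<ge> 0"
    using k by (auto simp: F_def intro!: divide_nonneg_nonneg)
  have "variance (\<lambda>\<omega>. \<Sum>j<n. out_effect n c N j * Z j \<omega>)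
      \<le> real k / real n * F * (\<Sum>j<n. (out_effect n c N j)\<^sup>2)"
    unfolding F_def using noise_ok_treatment_measurable[OF noise] Z01 D k
    by (rule variance_lincomb_uniform_subset)
  also have "\<dots> \<le> real k / real n * F * (real n * (L_max n c N)\<^sup>2)"
    using \<open>F \<ge> 0\<close> by (intro mult_left_mono sum_out_effect_sq_le) simp
  finally have "variance (\<lambda>\<omega>. (real n / real k) * (1 / real n) *
      (\<Sum>i<n. Y_obs c0 c N Z eps i 1 \<omega> - Y_obs c0 c N Z eps i 0 \<omega>))
    \<le> ((real n / real k) * (1 / real n))\<^sup>2
      * (real k / real n * F * (real n * (L_max n c N)\<^sup>2) + 2 * real n * \<sigma>\<^sup>2)"
    using noise \<open>0 < \<sigma>\<close> Z01 N by (rule variance_estimator_le)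
  also have "\<dots> = F / real k * (L_max n c N)\<^sup>2 + 2 * \<sigma>\<^sup>2 * real n / (real k)\<^sup>2"
    using k \<open>1 \<le> n\<close> by (simp add: field_simps power2_eq_square)
  finally show ?thesis
    by (simp add: F_def)
qed

end

theorem corollary1:
  fixes n :: nat and N :: "nat \<Rightarrow> nat set"
    and c0 :: "nat \<Rightarrow> real" and c :: "nat \<Rightarrow> nat \<Rightarrow> real" and \<sigma> :: real
  assumes "n \<ge> 1"
    and "\<And>i. i < n \<Longrightarrow> N i \<subseteq> {..<n}"
    and "\<sigma> > 0"
  shows
   "(\<forall>(M :: 'w measure) (Z :: nat \<Rightarrow> 'w \<Rightarrow> real) eps (p :: real).
      prob_space M \<and> 0 < p \<and> p \<le> 1 \<and>
      noise_ok M n \<sigma> Z eps \<and>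
      prob_space.indep_vars M (\<lambda>_. borel) Z {..<n} \<and>
      (\<forall>j<n. \<forall>\<omega>\<in>space M. Z j \<omega> \<in> {0,1}) \<and>
      (\<forall>j<n. measure M {\<omega>\<in>space M. Z j \<omega> = 1} = p)
      \<longrightarrow>
      prob_space.variance M
        (\<lambda>\<omega>. (1 / p) * (1 / real n) *
              (\<Sum>i<n. Y_obs c0 c N Z eps i 1 \<omega> - Y_obs c0 c N Z eps i 0 \<omega>))
      \<le> (1 - p) / (real n * p) * (L_max n c N)\<^sup>2 + 2 * \<sigma>\<^sup>2 / (real n * p\<^sup>2))
    \<and>
    (\<forall>(M :: 'v measure) (Z :: nat \<Rightarrow> 'v \<Rightarrow> real) eps (k :: nat).
      prob_space M \<and> 1 \<le> k \<and> k \<le> n \<and>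
      noise_ok M n \<sigma> Z eps \<and>
      (\<forall>j<n. \<forall>\<omega>\<in>space M. Z j \<omega> \<in> {0,1}) \<and>
      (\<forall>S. S \<subseteq> {..<n} \<and> card S = k \<longrightarrow>
         measure M {\<omega>\<in>space M. {j. j < n \<and> Z j \<omega> = 1} = S} = 1 / real (n choose k))
      \<longrightarrow>
      prob_space.variance M
        (\<lambda>\<omega>. (real n / real k) * (1 / real n) *
              (\<Sum>i<n. Y_obs c0 c N Z eps i 1 \<omega> - Y_obs c0 c N Z eps i 0 \<omega>))
      \<le> (real n - real k) / ((real n - 1) * real k) * (L_max n c N)\<^sup>2
         + 2 * \<sigma>\<^sup>2 * real n / (real k)\<^sup>2)"
  using assms
  by (intro conjI allI impI; elim conjE)
    ((rule prob_space.variance_estimator_bernoulli; blast),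
     (rule prob_space.variance_estimator_uniform_subset; blast))

end
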